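(* Let $S$ be the group defined in the context, and define the subgroups $$2_A=\langle (v_1v_3)^2,(v_1v_2)^2,s^2,ts\rangle,\qquad 2_C=\langle (v_1v_3)^2,(v_1v_2)^2,s^2,v_1v_3ts\rangle.$$ Both are isomorphic to $(\mathbb{Z}/2)^4$. Then there is an outer (i.e. non-inner) automorphism $\alpha:S\to S$ that exchanges $2_A$ and $2_C$.
   Context: Let $S$ be the group generated by $v_1,v_2,v_3,s,t$, where $v_1,v_2,v_3$ commute, each has order $4$, and together generate $(\mathbb{Z}/4)^3$. The elements $s,t$ generate $D_8=\langle t,s\mid t^2=s^4=(ts)^2=1\rangle$, which acts on $(\mathbb{Z}/4)^3$ by conjugation. Writing $x^y=yxy^{-1}$, the action is $$v_1^t=v_3^{-1},\quad v_2^t=v_2^{-1},\quad v_1^s=v_2,\quad v_2^s=v_3,\quad v_3^s=v_2^{-1}v_1v_3.$$ So $S=(\mathbb{Z}/4)^3\rtimes D_8$. *)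

theory Defs
  imports "HOL-Algebra.Algebra"
begin

text \<open>Concrete model of S = (Z/4)^3 \<rtimes> D_8.
  An element of (Z/4)^3 is a triple (x,y,z) of integers in {0..3}, standing for
  v1^x v2^y v3^z (written additively).  An element of D_8 is a pair (k,e) with
  k in {0..3}, e in {0,1}, standing for s^k t^e.  An element of S is a pair (v,g),
  standing for the product v g.\<close>

type_synonym vec4 = "int \<times> int \<times> int"
type_synonym d8 = "int \<times> int"

definition vmod :: "vec4 \<Rightarrow> vec4" where
  "vmod v = (case v of (x,y,z) \<Rightarrow> (x mod 4, y mod 4, z mod 4))"

definition vadd :: "vec4 \<Rightarrow> vec4 \<Rightarrow> vec4" where
  "vadd v w = (case v of (x,y,z) \<Rightarrow> case w of (x',y',z') \<Rightarrow> vmod (x+x', y+y', z+z'))"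

text \<open>Action of s: v1 \<mapsto> v2, v2 \<mapsto> v3, v3 \<mapsto> v2^{-1} v1 v3 (additively e3 \<mapsto> e1 - e2 + e3).\<close>
definition act_s :: "vec4 \<Rightarrow> vec4" where
  "act_s v = (case v of (x,y,z) \<Rightarrow> vmod (z, x - z, y + z))"

definition act_t :: "vec4 \<Rightarrow> vec4" where
  "act_t v = (case v of (x,y,z) \<Rightarrow> vmod (-z, -y, -x))"

text \<open>Action of s^k t^e by conjugation: g v g^{-1}.\<close>
definition d8_act :: "d8 \<Rightarrow> vec4 \<Rightarrow> vec4" where
  "d8_act g v = (case g of (k,e) \<Rightarrow> (act_s ^^ nat k) ((act_t ^^ nat e) v))"

text \<open>Multiplication in D_8 = <t,s | t^2 = s^4 = (ts)^2 = 1>, using t s^b = s^{-b} t.\<close>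
definition d8_mult :: "d8 \<Rightarrow> d8 \<Rightarrow> d8" where
  "d8_mult g h = (case g of (a,e) \<Rightarrow> case h of (b,f) \<Rightarrow>
      ((a + (if e = 0 then b else - b)) mod 4, (e + f) mod 2))"

definition S_grp :: "(vec4 \<times> d8) monoid" where
  "S_grp = \<lparr> carrier = ({0..3} \<times> {0..3} \<times> {0..3}) \<times> ({0..3} \<times> {0..1}),
             monoid.mult = (\<lambda>(v,g) (w,h). (vadd v (d8_act g w), d8_mult g h)),
             one = ((0,0,0),(0,0)) \<rparr>"

definition v1 :: "vec4 \<times> d8" where "v1 = ((1,0,0),(0,0))"
definition v2 :: "vec4 \<times> d8" where "v2 = ((0,1,0),(0,0))"
definition v3 :: "vec4 \<times> d8" where "v3 = ((0,0,1),(0,0))"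
definition s_el :: "vec4 \<times> d8" where "s_el = ((0,0,0),(1,0))"
definition t_el :: "vec4 \<times> d8" where "t_el = ((0,0,0),(0,1))"

definition two_A :: "(vec4 \<times> d8) set" where
  "two_A = generate S_grp
     { (v1 \<otimes>\<^bsub>S_grp\<^esub> v3) [^]\<^bsub>S_grp\<^esub> (2::nat),
       (v1 \<otimes>\<^bsub>S_grp\<^esub> v2) [^]\<^bsub>S_grp\<^esub> (2::nat),
       s_el [^]\<^bsub>S_grp\<^esub> (2::nat),
       t_el \<otimes>\<^bsub>S_grp\<^esub> s_el }"

definition two_C :: "(vec4 \<times> d8) set" where
  "two_C = generate S_grp
     { (v1 \<otimes>\<^bsub>S_grp\<^esub> v3) [^]\<^bsub>S_grp\<^esub> (2::nat),
       (v1 \<otimes>\<^bsub>S_grp\<^esub> v2) [^]\<^bsub>S_grp\<^esub> (2::nat),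
       s_el [^]\<^bsub>S_grp\<^esub> (2::nat),
       v1 \<otimes>\<^bsub>S_grp\<^esub> v3 \<otimes>\<^bsub>S_grp\<^esub> t_el \<otimes>\<^bsub>S_grp\<^esub> s_el }"

definition Z2_4 :: "(int \<times> int \<times> int \<times> int) monoid" where
  "Z2_4 = DirProd (integer_mod_group 2) (DirProd (integer_mod_group 2)
            (DirProd (integer_mod_group 2) (integer_mod_group 2)))"

end

theory Submission
  imports Defs "HOL-Library.Numeral_Type"
begin

(* S is the split extension V \<rtimes> D_8 of V = (Z/4)^3.  Since v1 v3 is fixed by s and inverted
   by t, sending reflections to v1 v3 and rotations to 1 is a crossed homomorphism c : D_8 \<rightarrow> V,
   so alpha(v g) = v c(g) g is an automorphism of S.  It fixes V and s and sends t to v1 v3 t;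
   hence it maps the generators of 2_A onto those of 2_C, and those of 2_C onto those of 2_A
   except that v1 v3 t s becomes (v1 v3)^2 t s, which generates the same subgroup together
   with (v1 v3)^2.  If alpha were conjugation by g, then g would centralize V, hence lie in V
   because D_8 acts faithfully.  Writing g = u additively, u would be fixed by s, forcing
   u = (a,0,a), and u - t u = v1 v3; but u - t u = (2a,0,2a) has even coordinates.  Finally,
   (Z/2)^4 maps isomorphically onto 2_A by sending the unit vectors to its four generators. *)

definition semidirect_product ::
    "('a, 'c) monoid_scheme \<Rightarrow> ('b, 'd) monoid_scheme \<Rightarrow> ('b \<Rightarrow> 'a \<Rightarrow> 'a) \<Rightarrow> ('a \<times> 'b) monoid" where
  "semidirect_product V H \<phi> =
     \<lparr> carrier = carrier V \<times> carrier H,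
       monoid.mult = (\<lambda>(v, g) (w, h). (v \<otimes>\<^bsub>V\<^esub> \<phi> g w, g \<otimes>\<^bsub>H\<^esub> h)),
       one = (\<one>\<^bsub>V\<^esub>, \<one>\<^bsub>H\<^esub>) \<rparr>"

locale group_action_by_automorphisms = V: group V + H: group H
  for V :: "('a, 'c) monoid_scheme" and H :: "('b, 'd) monoid_scheme" +
  fixes \<phi> :: "'b \<Rightarrow> 'a \<Rightarrow> 'a"
  assumes action_hom: "g \<in> carrier H \<Longrightarrow> \<phi> g \<in> hom V V"
    and action_mult: "\<lbrakk>g \<in> carrier H; h \<in> carrier H; v \<in> carrier V\<rbrakk>
                      \<Longrightarrow> \<phi> (g \<otimes>\<^bsub>H\<^esub> h) v = \<phi> g (\<phi> h v)"
    and action_one: "v \<in> carrier V \<Longrightarrow> \<phi> \<one>\<^bsub>H\<^esub> v = v"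
begin

lemma action_closed: "\<lbrakk>g \<in> carrier H; v \<in> carrier V\<rbrakk> \<Longrightarrow> \<phi> g v \<in> carrier V"
  by (rule hom_in_carrier[OF action_hom])

lemma action_mult_distrib:
  "\<lbrakk>g \<in> carrier H; v \<in> carrier V; w \<in> carrier V\<rbrakk> \<Longrightarrow> \<phi> g (v \<otimes>\<^bsub>V\<^esub> w) = \<phi> g v \<otimes>\<^bsub>V\<^esub> \<phi> g w"
  by (rule hom_mult[OF action_hom])

lemma action_fixes_one: "g \<in> carrier H \<Longrightarrow> \<phi> g \<one>\<^bsub>V\<^esub> = \<one>\<^bsub>V\<^esub>"
  using action_hom V.group_axioms by (simp add: group_hom.hom_one group_hom_axioms.intro group_hom_def)

lemma group_semidirect_product: "group (semidirect_product V H \<phi>)" (is "group ?S")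
proof (rule groupI)
  fix x y z
  assume "x \<in> carrier ?S" "y \<in> carrier ?S" "z \<in> carrier ?S"
  then show "x \<otimes>\<^bsub>?S\<^esub> y \<otimes>\<^bsub>?S\<^esub> z = x \<otimes>\<^bsub>?S\<^esub> (y \<otimes>\<^bsub>?S\<^esub> z)"
    by (auto simp: semidirect_product_def action_closed action_mult action_mult_distrib V.m_assoc H.m_assoc)
next
  fix x assume "x \<in> carrier ?S"
  then obtain v g where x: "x = (v, g)" and vg: "v \<in> carrier V" "g \<in> carrier H"
    by (auto simp: semidirect_product_def)
  let ?y = "(\<phi> (inv\<^bsub>H\<^esub> g) (inv\<^bsub>V\<^esub> v), inv\<^bsub>H\<^esub> g)"
  have "?y \<otimes>\<^bsub>?S\<^esub> x = \<one>\<^bsub>?S\<^esub>"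
    using vg by (simp add: x semidirect_product_def flip: action_mult_distrib) (simp add: action_fixes_one)
  moreover have "?y \<in> carrier ?S"
    using vg by (simp add: semidirect_product_def action_closed)
  ultimately show "\<exists>y \<in> carrier ?S. y \<otimes>\<^bsub>?S\<^esub> x = \<one>\<^bsub>?S\<^esub>"
    by blast
qed (auto simp: semidirect_product_def action_closed action_one)

lemma crossed_hom_iso:
  assumes "comm_group V" and c: "c \<in> carrier H \<rightarrow> carrier V"
    and crossed: "\<And>g h. \<lbrakk>g \<in> carrier H; h \<in> carrier H\<rbrakk>
                    \<Longrightarrow> c (g \<otimes>\<^bsub>H\<^esub> h) = c g \<otimes>\<^bsub>V\<^esub> \<phi> g (c h)"
  shows "(\<lambda>(v, g). (v \<otimes>\<^bsub>V\<^esub> c g, g)) \<in> iso (semidirect_product V H \<phi>) (semidirect_product V H \<phi>)"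
    (is "?\<alpha> \<in> iso ?S ?S")
proof -
  interpret V: comm_group V by fact
  have cH: "g \<in> carrier H \<Longrightarrow> c g \<in> carrier V" for g
    using c by blast
  have "?\<alpha> \<in> hom ?S ?S"
    by (rule homI) (auto simp: semidirect_product_def crossed cH action_closed action_mult_distrib V.m_ac)
  moreover have "bij_betw ?\<alpha> (carrier ?S) (carrier ?S)"
    by (rule bij_betw_byWitness[where f' = "\<lambda>(v, g). (v \<otimes>\<^bsub>V\<^esub> inv\<^bsub>V\<^esub> c g, g)"])
       (auto simp: semidirect_product_def cH V.m_assoc)
  ultimately show ?thesis
    by (simp add: iso_def)
qed

lemma translation_commute_iff:
  assumes "comm_group V" "v \<in> carrier V" "u \<in> carrier V" "h \<in> carrier H"
  shows "(v, \<one>\<^bsub>H\<^esub>) \<otimes>\<^bsub>semidirect_product V H \<phi>\<^esub> (u, h) = (u, h) \<otimes>\<^bsub>semidirect_product V H \<phi>\<^esub> (v, \<one>\<^bsub>H\<^esub>)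
         \<longleftrightarrow> \<phi> h v = v" (is "?vu = ?uv \<longleftrightarrow> _")
proof -
  interpret V: comm_group V by fact
  have "?vu = (v \<otimes>\<^bsub>V\<^esub> u, h)" "?uv = (u \<otimes>\<^bsub>V\<^esub> \<phi> h v, h)"
    using assms by (simp_all add: semidirect_product_def action_one)
  moreover have "v \<otimes>\<^bsub>V\<^esub> u = u \<otimes>\<^bsub>V\<^esub> \<phi> h v \<longleftrightarrow> \<phi> h v = v"
    using assms V.m_comm[of v u] V.l_cancel[of u v "\<phi> h v"] action_closed[of h v] by auto
  ultimately show ?thesis
    by simp
qed

end

lemma funpow_hom: "f \<in> hom G G \<Longrightarrow> f ^^ n \<in> hom G G"
  by (induction n) (auto simp: hom_def Pi_def)

lemma (in group_hom) img_iso_if_inj: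
  assumes "inj_on h (carrier G)"
  shows "H\<lparr>carrier := h ` carrier G\<rparr> \<cong> G"
proof -
  have "h \<in> iso G (H\<lparr>carrier := h ` carrier G\<rparr>)"
    using assms by (auto simp: iso_def hom_def bij_betw_def)
  then show ?thesis
    by (rule G.iso_sym[OF is_isoI])
qed

lemma (in group) generate_insert_mult:
  assumes K: "K \<subseteq> carrier G" and a: "a \<in> generate G K" and d: "d \<in> carrier G"
  shows "generate G (insert (a \<otimes> d) K) = generate G (insert d K)"
proof -
  have a_carrier: "a \<in> carrier G"
    using K a generate_in_carrier by blast
  have a_gen: "a \<in> generate G (insert x K)" for x
    using a mono_generate[of K "insert x K"] by blast
  have "a \<otimes> d \<in> generate G (insert d K)"
    using a_gen by (blast intro: generate.eng generate.incl)
  moreover have "d \<in> generate G (insert (a \<otimes> d) K)"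
  proof -
    have "inv a \<in> generate G (insert (a \<otimes> d) K)"
      using generate_m_inv_closed[OF _ a_gen] K a_carrier d by blast
    then have "inv a \<otimes> (a \<otimes> d) \<in> generate G (insert (a \<otimes> d) K)"
      by (blast intro: generate.eng generate.incl)
    then show ?thesis
      using a_carrier d by (simp flip: m_assoc)
  qed
  ultimately show ?thesis
    using K a_carrier d
    by (intro equalityI generate_subgroup_incl generate_is_subgroup) (auto intro: generate.incl)
qed

lemma mod4_eq_iff_of_int_eq: "(a::int) mod 4 = b mod 4 \<longleftrightarrow> (of_int a :: 4) = of_int b"
  by (simp add: bit0.of_int_eq Abs_bit0_inject)

lemma mod4_eq_0_iff: "(a::int) mod 4 = 0 \<longleftrightarrow> (of_int a :: 4) = 0"
  using mod4_eq_iff_of_int_eq[of a 0] by simp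

lemma of_int_mod4: "(of_int (a mod 4) :: 4) = of_int a"
  by (simp add: bit0.of_int_eq)

(* Congruences mod 4 are decided by moving them into the ring Z/4 (type 4). *)
lemmas mod4_to_ring = mod4_eq_iff_of_int_eq mod4_eq_0_iff of_int_mod4
  of_int_add of_int_diff of_int_minus of_int_mult

definition Z4_cube :: "vec4 monoid" where
  "Z4_cube = integer_mod_group 4 \<times>\<times> integer_mod_group 4 \<times>\<times> integer_mod_group 4"

lemma carrier_Z4_cube: "carrier Z4_cube = {0..<4} \<times> {0..<4} \<times> {0..<4}"
  by (simp add: Z4_cube_def carrier_integer_mod_group)

lemma one_Z4_cube: "\<one>\<^bsub>Z4_cube\<^esub> = (0,0,0)"
  by (simp add: Z4_cube_def)

lemma mult_Z4_cube: "v \<otimes>\<^bsub>Z4_cube\<^esub> w = vadd v w"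
  by (cases v; cases w) (simp add: Z4_cube_def vadd_def vmod_def)

lemma vadd_zero_left [simp]: "vadd (0,0,0) v = vmod v"
  by (cases v) (simp add: vadd_def vmod_def)

lemma vadd_zero_right [simp]: "vadd v (0,0,0) = vmod v"
  by (cases v) (simp add: vadd_def vmod_def)

lemma comm_group_Z4_cube: "comm_group Z4_cube"
proof -
  have "group Z4_cube"
    by (simp add: Z4_cube_def DirProd_group)
  then show ?thesis
    by (rule group.group_comm_groupI) (auto simp: mult_Z4_cube vadd_def add.commute)
qed

lemma vmod_eq_self: "v \<in> carrier Z4_cube \<Longrightarrow> vmod v = v"
  by (cases v) (simp add: carrier_Z4_cube vmod_def)

lemma act_s_closed [simp]: "act_s v \<in> carrier Z4_cube"
  by (cases v) (simp add: act_s_def vmod_def carrier_Z4_cube)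

lemma act_t_closed [simp]: "act_t v \<in> carrier Z4_cube"
  by (cases v) (simp add: act_t_def vmod_def carrier_Z4_cube)

lemma act_s_hom: "act_s \<in> hom Z4_cube Z4_cube"
  by (rule homI)
     (auto simp: carrier_Z4_cube mult_Z4_cube act_s_def vadd_def vmod_def mod4_to_ring algebra_simps)

lemma act_t_hom: "act_t \<in> hom Z4_cube Z4_cube"
  by (rule homI)
     (auto simp: carrier_Z4_cube mult_Z4_cube act_t_def vadd_def vmod_def mod4_to_ring algebra_simps)

lemma d8_act_hom: "d8_act g \<in> hom Z4_cube Z4_cube"
proof -
  obtain k e where g: "g = (k, e)"
    by fastforce
  note s = funpow_hom[OF act_s_hom, of "nat k"] and t = funpow_hom[OF act_t_hom, of "nat e"]
  show ?thesis
    by (rule homI) (simp_all add: g d8_act_def hom_in_carrier[OF s] hom_in_carrier[OF t]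
                                  hom_mult[OF s] hom_mult[OF t])
qed

lemma act_s_order_4: "act_s (act_s (act_s (act_s v))) = vmod v"
  by (cases v) (simp add: act_s_def vmod_def mod4_to_ring algebra_simps)

lemma act_t_involution: "act_t (act_t v) = vmod v"
  by (cases v) (simp add: act_t_def vmod_def mod4_to_ring)

lemma act_t_act_s: "act_t (act_s v) = act_s (act_s (act_s (act_t v)))"
  by (cases v) (simp add: act_s_def act_t_def vmod_def mod4_to_ring algebra_simps)

definition reflect_mod4 :: "int \<Rightarrow> int \<Rightarrow> int" where
  "reflect_mod4 e k = (if e = 0 then k else - k mod 4)"

definition D8_grp :: "d8 monoid" where
  "D8_grp = semidirect_product (integer_mod_group 4) (integer_mod_group 2) reflect_mod4"

lemma reflect_mod4_automorphisms:
  "group_action_by_automorphisms (integer_mod_group 4) (integer_mod_group 2) reflect_mod4"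
proof (intro group_action_by_automorphisms.intro group_action_by_automorphisms_axioms.intro
             group_integer_mod_group)
  fix e assume "e \<in> carrier (integer_mod_group 2)"
  show "reflect_mod4 e \<in> hom (integer_mod_group 4) (integer_mod_group 4)"
    by (rule homI) (auto simp: carrier_integer_mod_group reflect_mod4_def mod_simps algebra_simps)
next
  fix e f k assume "e \<in> carrier (integer_mod_group 2)" "f \<in> carrier (integer_mod_group 2)"
    "k \<in> carrier (integer_mod_group 4)"
  moreover have "e = 0 \<or> e = 1" "f = 0 \<or> f = 1"
    using \<open>e \<in> _\<close> \<open>f \<in> _\<close> by (auto simp: carrier_integer_mod_group)
  ultimately show "reflect_mod4 (e \<otimes>\<^bsub>integer_mod_group 2\<^esub> f) k = reflect_mod4 e (reflect_mod4 f k)"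
    by (auto simp: carrier_integer_mod_group reflect_mod4_def mod_simps)
qed (simp add: reflect_mod4_def)

lemma carrier_D8_grp: "carrier D8_grp = {0..<4} \<times> {0..<2}"
  by (simp add: D8_grp_def semidirect_product_def carrier_integer_mod_group)

lemma one_D8_grp: "\<one>\<^bsub>D8_grp\<^esub> = (0,0)"
  by (simp add: D8_grp_def semidirect_product_def)

lemma mult_D8_grp: "g \<otimes>\<^bsub>D8_grp\<^esub> h = d8_mult g h"
  by (cases g; cases h) (simp add: D8_grp_def semidirect_product_def reflect_mod4_def d8_mult_def mod_simps)

lemma D8_grp_cases:
  assumes "g \<in> carrier D8_grp"
  obtains "g = (0,0)" | "g = (1,0)" | "g = (2,0)" | "g = (3,0)"
        | "g = (0,1)" | "g = (1,1)" | "g = (2,1)" | "g = (3,1)"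
proof -
  have "{0..<4::int} = {0,1,2,3}" "{0..<2::int} = {0,1}"
    by auto
  then show ?thesis
    using assms that by (auto simp: carrier_D8_grp)
qed

lemma d8_act_mult:
  assumes "g \<in> carrier D8_grp" "h \<in> carrier D8_grp" "v \<in> carrier Z4_cube"
  shows "d8_act (d8_mult g h) v = d8_act g (d8_act h v)"
  by (rule D8_grp_cases[OF assms(1)]; rule D8_grp_cases[OF assms(2)];
      simp add: d8_mult_def d8_act_def numeral_eq_Suc act_t_act_s act_s_order_4 act_t_involution
                    vmod_eq_self[OF assms(3)] vmod_eq_self[OF act_s_closed] vmod_eq_self[OF act_t_closed])

lemma S_grp_semidirect_product: "S_grp = semidirect_product Z4_cube D8_grp d8_act"
proof -
  have "{0..3::int} = {0..<4}" "{0..1::int} = {0..<2}"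
    by auto
  then show ?thesis
    by (simp add: S_grp_def semidirect_product_def carrier_Z4_cube carrier_D8_grp mult_Z4_cube
                  mult_D8_grp one_Z4_cube one_D8_grp)
qed

lemma d8_act_automorphisms: "group_action_by_automorphisms Z4_cube D8_grp d8_act"
proof (intro group_action_by_automorphisms.intro group_action_by_automorphisms_axioms.intro
             d8_act_hom)
  show "group Z4_cube"
    using comm_group_Z4_cube by (rule comm_group.axioms)
  show "group D8_grp"
    unfolding D8_grp_def
    by (rule group_action_by_automorphisms.group_semidirect_product[OF reflect_mod4_automorphisms])
next
  fix g h v
  assume "g \<in> carrier D8_grp" "h \<in> carrier D8_grp" "v \<in> carrier Z4_cube"
  then show "d8_act (g \<otimes>\<^bsub>D8_grp\<^esub> h) v = d8_act g (d8_act h v)"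
    by (simp add: mult_D8_grp d8_act_mult)
qed (simp add: one_D8_grp d8_act_def)

lemma group_S_grp: "group S_grp"
  unfolding S_grp_semidirect_product
  by (rule group_action_by_automorphisms.group_semidirect_product[OF d8_act_automorphisms])

lemma carrier_S_grp: "carrier S_grp = carrier Z4_cube \<times> carrier D8_grp"
  by (simp add: S_grp_semidirect_product semidirect_product_def)

lemma mult_S_grp: "(v, g) \<otimes>\<^bsub>S_grp\<^esub> (w, h) = (vadd v (d8_act g w), d8_mult g h)"
  by (simp add: S_grp_def)

lemma S_grp_square: "x \<in> carrier S_grp \<Longrightarrow> x [^]\<^bsub>S_grp\<^esub> (2::nat) = x \<otimes>\<^bsub>S_grp\<^esub> x"
  using group.is_monoid[OF group_S_grp] by (simp add: numeral_2_eq_2 monoid.l_one)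

definition reflection_cocycle :: "d8 \<Rightarrow> vec4" where
  "reflection_cocycle g = (if snd g = 1 then (1,0,1) else (0,0,0))"

definition alpha :: "vec4 \<times> d8 \<Rightarrow> vec4 \<times> d8" where
  "alpha = (\<lambda>(v, g). (vadd v (reflection_cocycle g), g))"

lemma d8_act_v1_v3:
  "g \<in> carrier D8_grp \<Longrightarrow> d8_act g (1,0,1) = (if snd g = 1 then (3,0,3) else (1,0,1))"
  by (erule D8_grp_cases) (simp_all add: d8_act_def numeral_eq_Suc act_s_def act_t_def vmod_def)

lemma reflection_cocycle_crossed:
  assumes g: "g \<in> carrier D8_grp" and h: "h \<in> carrier D8_grp"
  shows "reflection_cocycle (d8_mult g h) = vadd (reflection_cocycle g) (d8_act g (reflection_cocycle h))"
proof -
  obtain k e k' f where gh: "g = (k, e)" "h = (k', f)"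
    by fastforce
  have ef: "e = 0 \<or> e = 1" "f = 0 \<or> f = 1"
    using g h by (auto simp: gh carrier_D8_grp)
  have "d8_act g (0,0,0) = (0,0,0)"
    using group_action_by_automorphisms.action_fixes_one[OF d8_act_automorphisms g]
    by (simp add: one_Z4_cube)
  then show ?thesis
    using d8_act_v1_v3[OF g] ef
    by (auto simp: gh reflection_cocycle_def d8_mult_def vadd_def vmod_def)
qed

lemma alpha_iso: "alpha \<in> iso S_grp S_grp"
proof -
  have c: "reflection_cocycle \<in> carrier D8_grp \<rightarrow> carrier Z4_cube"
    by (auto simp: reflection_cocycle_def carrier_Z4_cube)
  have crossed: "reflection_cocycle (g \<otimes>\<^bsub>D8_grp\<^esub> h)
      = reflection_cocycle g \<otimes>\<^bsub>Z4_cube\<^esub> d8_act g (reflection_cocycle h)"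
    if "g \<in> carrier D8_grp" "h \<in> carrier D8_grp" for g h
    using that by (simp add: mult_D8_grp mult_Z4_cube reflection_cocycle_crossed)
  have "alpha = (\<lambda>(v, g). (v \<otimes>\<^bsub>Z4_cube\<^esub> reflection_cocycle g, g))"
    by (simp add: alpha_def mult_Z4_cube)
  also have "\<dots> \<in> iso S_grp S_grp"
    unfolding S_grp_semidirect_product
    using group_action_by_automorphisms.crossed_hom_iso
            [OF d8_act_automorphisms comm_group_Z4_cube c crossed] .
  finally show ?thesis .
qed

lemma alpha_group_hom: "group_hom S_grp S_grp alpha"
  using alpha_iso by (intro group_hom.intro group_hom_axioms.intro group_S_grp) (simp add: iso_def)

lemma v1_v2_v3_centralizer:
  assumes uh: "(u, h) \<in> carrier S_grp"
    and commute: "\<forall>x \<in> {v1, v2, v3}. x \<otimes>\<^bsub>S_grp\<^esub> (u, h) = (u, h) \<otimes>\<^bsub>S_grp\<^esub> x"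
  shows "h = (0,0)"
proof -
  have u: "u \<in> carrier Z4_cube" and h: "h \<in> carrier D8_grp"
    using uh by (auto simp: S_grp_semidirect_product semidirect_product_def)
  have "d8_act h e = e" if "e \<in> {(1,0,0), (0,1,0), (0,0,1)}" for e
  proof -
    have e: "e \<in> carrier Z4_cube" and "(e, \<one>\<^bsub>D8_grp\<^esub>) \<in> {v1, v2, v3}"
      using that by (auto simp: carrier_Z4_cube one_D8_grp v1_def v2_def v3_def)
    then have "(e, \<one>\<^bsub>D8_grp\<^esub>) \<otimes>\<^bsub>S_grp\<^esub> (u, h) = (u, h) \<otimes>\<^bsub>S_grp\<^esub> (e, \<one>\<^bsub>D8_grp\<^esub>)"
      using commute by blast
    then show ?thesis
      using group_action_by_automorphisms.translation_commute_iff
              [OF d8_act_automorphisms comm_group_Z4_cube e u h]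
      by (simp add: S_grp_semidirect_product)
  qed
  then have "d8_act h (1,0,0) = (1,0,0)" "d8_act h (0,1,0) = (0,1,0)" "d8_act h (0,0,1) = (0,0,1)"
    by auto
  then show ?thesis
    by (cases rule: D8_grp_cases[OF h])
       (simp_all add: d8_act_def numeral_eq_Suc act_s_def act_t_def vmod_def)
qed

lemma reflection_cocycle_not_coboundary:
  assumes "u \<in> carrier Z4_cube" "act_s u = u"
  shows "vadd (1,0,1) (act_t u) \<noteq> u"
proof -
  obtain a b c where abc: "u = (a, b, c)" "0 \<le> a" "a < 4" "0 \<le> b" "b < 4" "0 \<le> c" "c < 4"
    using assms(1) by (auto simp: carrier_Z4_cube)
  then have "c = a" "b = 0"
    using assms(2) by (auto simp: act_s_def vmod_def)
  then show ?thesis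
    using abc by (auto simp: act_t_def vadd_def vmod_def mod_simps) presburger
qed

lemma alpha_not_inner:
  "\<not> (\<exists>g \<in> carrier S_grp. \<forall>x \<in> carrier S_grp.
         alpha x = g \<otimes>\<^bsub>S_grp\<^esub> x \<otimes>\<^bsub>S_grp\<^esub> inv\<^bsub>S_grp\<^esub> g)"
proof
  interpret S: group S_grp
    by (rule group_S_grp)
  assume "\<exists>g \<in> carrier S_grp. \<forall>x \<in> carrier S_grp.
            alpha x = g \<otimes>\<^bsub>S_grp\<^esub> x \<otimes>\<^bsub>S_grp\<^esub> inv\<^bsub>S_grp\<^esub> g"
  then obtain u h where g: "(u, h) \<in> carrier S_grp"
    and inner: "\<And>x. x \<in> carrier S_grp \<Longrightarrow>
                  alpha x = (u, h) \<otimes>\<^bsub>S_grp\<^esub> x \<otimes>\<^bsub>S_grp\<^esub> inv\<^bsub>S_grp\<^esub> (u, h)"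
    by auto
  have intertwines: "alpha x \<otimes>\<^bsub>S_grp\<^esub> (u, h) = (u, h) \<otimes>\<^bsub>S_grp\<^esub> x" if "x \<in> carrier S_grp" for x
    using inner[OF that] g that by (simp add: S.m_assoc)
  have gens: "v1 \<in> carrier S_grp" "v2 \<in> carrier S_grp" "v3 \<in> carrier S_grp"
      "s_el \<in> carrier S_grp" "t_el \<in> carrier S_grp"
    by (auto simp: S_grp_def v1_def v2_def v3_def s_el_def t_el_def)
  have fixed: "alpha x = x" if "x \<in> {v1, v2, v3, s_el}" for x
    using that by (auto simp: alpha_def reflection_cocycle_def v1_def v2_def v3_def s_el_def vadd_def vmod_def)
  have "x \<otimes>\<^bsub>S_grp\<^esub> (u, h) = (u, h) \<otimes>\<^bsub>S_grp\<^esub> x" if "x \<in> {v1, v2, v3}" for x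
  proof -
    have "x \<in> carrier S_grp" "alpha x = x"
      using that gens fixed by blast+
    then show ?thesis
      using intertwines by metis
  qed
  then have "h = (0,0)"
    using v1_v2_v3_centralizer[OF g] by blast
  have u: "u \<in> carrier Z4_cube"
    using g by (auto simp: S_grp_semidirect_product semidirect_product_def)
  have "act_s u = u"
    using intertwines[OF gens(4)] fixed[of s_el] \<open>h = (0,0)\<close> u
    by (simp add: mult_S_grp s_el_def d8_act_def d8_mult_def vmod_eq_self)
  moreover have "vadd (1,0,1) (act_t u) = u"
    using intertwines[OF gens(5)] \<open>h = (0,0)\<close> u
    by (simp add: mult_S_grp t_el_def alpha_def reflection_cocycle_def d8_act_def d8_mult_def
                  vmod_eq_self carrier_Z4_cube)
  ultimately show False
    using reflection_cocycle_not_coboundary[OF u] by blast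
qed

lemma carrier_Z2_4: "carrier Z2_4 = {0..<2} \<times> {0..<2} \<times> {0..<2} \<times> {0..<2}"
  by (simp add: Z2_4_def carrier_integer_mod_group)

lemma mult_Z2_4:
  "(a, b, c, d) \<otimes>\<^bsub>Z2_4\<^esub> (a', b', c', d') = ((a + a') mod 2, (b + b') mod 2, (c + c') mod 2, (d + d') mod 2)"
  by (simp add: Z2_4_def)

lemma one_Z2_4: "\<one>\<^bsub>Z2_4\<^esub> = (0,0,0,0)"
  by (simp add: Z2_4_def)

lemma group_Z2_4: "group Z2_4"
  by (simp add: Z2_4_def DirProd_group)

lemma Z2_4_cases:
  assumes "z \<in> carrier Z2_4"
  obtains a b c d where "z = (a, b, c, d)" "a \<in> {0,1}" "b \<in> {0,1}" "c \<in> {0,1}" "d \<in> {0,1}"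
proof -
  have "{0..<2::int} = {0,1}"
    by auto
  then show ?thesis
    using assms that by (cases z) (auto simp: carrier_Z2_4)
qed

lemma generate_Z2_4_unit_vectors:
  "generate Z2_4 {(1,0,0,0), (0,1,0,0), (0,0,1,0), (0,0,0,1)} = carrier Z2_4"
proof
  interpret Z: group Z2_4
    by (rule group_Z2_4)
  let ?E = "{(1,0,0,0), (0,1,0,0), (0,0,1,0), (0,0,0,1)} :: (int \<times> int \<times> int \<times> int) set"
  have "?E \<subseteq> carrier Z2_4"
    by (auto simp: carrier_Z2_4)
  then show "generate Z2_4 ?E \<subseteq> carrier Z2_4"
    by (rule Z.generate_incl)
  show "carrier Z2_4 \<subseteq> generate Z2_4 ?E"
  proof
    fix z assume "z \<in> carrier Z2_4"
    then obtain a b c d where z: "z = (a, b, c, d)"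
      and abcd: "a \<in> {0,1}" "b \<in> {0,1}" "c \<in> {0,1}" "d \<in> {0,1}"
      by (rule Z2_4_cases)
    have "(a, 0, 0, 0) \<in> generate Z2_4 ?E" "(0, b, 0, 0) \<in> generate Z2_4 ?E"
      "(0, 0, c, 0) \<in> generate Z2_4 ?E" "(0, 0, 0, d) \<in> generate Z2_4 ?E"
      using abcd generate.one[of Z2_4 ?E] by (auto simp: Z2_4_def intro: generate.incl)
    then have "(a, 0, 0, 0) \<otimes>\<^bsub>Z2_4\<^esub> ((0, b, 0, 0) \<otimes>\<^bsub>Z2_4\<^esub> ((0, 0, c, 0) \<otimes>\<^bsub>Z2_4\<^esub> (0, 0, 0, d)))
            \<in> generate Z2_4 ?E"
      by (intro generate.eng)
    then show "z \<in> generate Z2_4 ?E"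
      using abcd by (auto simp: z mult_Z2_4)
  qed
qed

(* klein_V a b = (v1 v3)^(2a) (v1 v2)^(2b) and klein_D c d = s^(2c) (t s)^d. *)
definition klein_V :: "int \<Rightarrow> int \<Rightarrow> vec4" where
  "klein_V a b = ((2 * a + 2 * b) mod 4, 2 * b, 2 * a)"

definition klein_D :: "int \<Rightarrow> int \<Rightarrow> d8" where
  "klein_D c d = ((2 * c + 3 * d) mod 4, d)"

lemma klein_V_add:
  "\<lbrakk>a \<in> {0,1}; b \<in> {0,1}; a' \<in> {0,1}; b' \<in> {0,1}\<rbrakk>
   \<Longrightarrow> klein_V ((a + a') mod 2) ((b + b') mod 2) = vadd (klein_V a b) (klein_V a' b')"
  by (auto simp: klein_V_def vadd_def vmod_def)

lemma klein_D_mult: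
  "\<lbrakk>c \<in> {0,1}; d \<in> {0,1}; c' \<in> {0,1}; d' \<in> {0,1}\<rbrakk>
   \<Longrightarrow> klein_D ((c + c') mod 2) ((d + d') mod 2) = d8_mult (klein_D c d) (klein_D c' d')"
  by (auto simp: klein_D_def d8_mult_def)

lemma klein_D_fixes_klein_V:
  "\<lbrakk>a \<in> {0,1}; b \<in> {0,1}; c \<in> {0,1}; d \<in> {0,1}\<rbrakk> \<Longrightarrow> d8_act (klein_D c d) (klein_V a b) = klein_V a b"
  by (auto simp: klein_D_def klein_V_def d8_act_def numeral_eq_Suc act_s_def act_t_def vmod_def)

definition psi :: "int \<times> int \<times> int \<times> int \<Rightarrow> vec4 \<times> d8" where
  "psi = (\<lambda>(a, b, c, d). (klein_V a b, klein_D c d))"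

lemma psi_hom: "psi \<in> hom Z2_4 S_grp"
proof (rule homI)
  fix z assume "z \<in> carrier Z2_4"
  then show "psi z \<in> carrier S_grp"
    by (rule Z2_4_cases) (auto simp: psi_def klein_V_def klein_D_def S_grp_def)
next
  fix z z' assume "z \<in> carrier Z2_4" "z' \<in> carrier Z2_4"
  then show "psi (z \<otimes>\<^bsub>Z2_4\<^esub> z') = psi z \<otimes>\<^bsub>S_grp\<^esub> psi z'"
    by (elim Z2_4_cases)
       (simp add: psi_def mult_Z2_4 S_grp_def klein_V_add klein_D_mult klein_D_fixes_klein_V)
qed

lemma psi_group_hom: "group_hom Z2_4 S_grp psi"
  by (intro group_hom.intro group_hom_axioms.intro group_Z2_4 group_S_grp psi_hom)

lemma psi_inj: "inj_on psi (carrier Z2_4)"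
proof -
  interpret group_hom Z2_4 S_grp psi
    by (rule psi_group_hom)
  show ?thesis
    unfolding inj_on_one_iff
    by (auto elim!: Z2_4_cases simp: psi_def klein_V_def klein_D_def S_grp_def one_Z2_4)
qed

lemma two_A_generated:
  "two_A = generate S_grp {((2,0,2),(0,0)), ((2,2,0),(0,0)), ((0,0,0),(2,0)), ((0,0,0),(3,1))}"
  by (simp add: two_A_def S_grp_square mult_S_grp carrier_S_grp carrier_Z4_cube carrier_D8_grp
                v1_def v2_def v3_def s_el_def t_el_def d8_act_def act_s_def act_t_def vadd_def vmod_def
                d8_mult_def)

lemma two_C_generated:
  "two_C = generate S_grp {((2,0,2),(0,0)), ((2,2,0),(0,0)), ((0,0,0),(2,0)), ((1,0,1),(3,1))}"
  by (simp add: two_C_def S_grp_square mult_S_grp carrier_S_grp carrier_Z4_cube carrier_D8_grp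
                v1_def v2_def v3_def s_el_def t_el_def d8_act_def act_s_def act_t_def vadd_def vmod_def
                d8_mult_def)

lemma two_A_eq_img_psi: "two_A = psi ` carrier Z2_4"
proof -
  interpret psi: group_hom Z2_4 S_grp psi
    by (rule psi_group_hom)
  let ?E = "{(1,0,0,0), (0,1,0,0), (0,0,1,0), (0,0,0,1)} :: (int \<times> int \<times> int \<times> int) set"
  have "psi ` ?E = {((2,0,2),(0,0)), ((2,2,0),(0,0)), ((0,0,0),(2,0)), ((0,0,0),(3,1))}"
    by (simp add: psi_def klein_V_def klein_D_def)
  then have "two_A = generate S_grp (psi ` ?E)"
    by (simp add: two_A_generated)
  also have "\<dots> = psi ` generate Z2_4 ?E"
    by (rule psi.generate_img) (simp add: carrier_Z2_4)
  finally show ?thesis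
    by (simp add: generate_Z2_4_unit_vectors)
qed

lemma two_C_eq_img_alpha: "two_C = alpha ` two_A"
proof -
  interpret alpha: group_hom S_grp S_grp alpha
    by (rule alpha_group_hom)
  have "two_C = generate S_grp
                  (alpha ` {((2,0,2),(0,0)), ((2,2,0),(0,0)), ((0,0,0),(2,0)), ((0,0,0),(3,1))})"
    by (simp add: two_C_generated alpha_def reflection_cocycle_def vadd_def vmod_def)
  also have "\<dots> = alpha ` two_A"
    unfolding two_A_generated by (rule alpha.generate_img) (simp add: S_grp_def)
  finally show ?thesis .
qed

lemma alpha_img_two_C: "alpha ` two_C = two_A"
proof -
  interpret S: group S_grp
    by (rule group_S_grp)
  interpret alpha: group_hom S_grp S_grp alpha
    by (rule alpha_group_hom)
  let ?K = "{((2,0,2),(0,0)), ((2,2,0),(0,0)), ((0,0,0),(2,0))} :: (vec4 \<times> d8) set"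
  have K: "?K \<subseteq> carrier S_grp" "((2,0,2),(0,0)) \<in> generate S_grp ?K"
    "((0,0,0),(3,1)) \<in> carrier S_grp"
    by (auto simp: S_grp_def intro: generate.incl)
  have "two_C = generate S_grp (insert ((1,0,1),(3,1)) ?K)"
    by (simp add: two_C_generated insert_commute)
  then have "alpha ` two_C = generate S_grp (alpha ` insert ((1,0,1),(3,1)) ?K)"
    using alpha.generate_img[of "insert ((1,0,1),(3,1)) ?K"] by (simp add: S_grp_def)
  also have "alpha ` insert ((1,0,1),(3,1)) ?K
             = insert (((2,0,2),(0,0)) \<otimes>\<^bsub>S_grp\<^esub> ((0,0,0),(3,1))) ?K"
    by (simp add: alpha_def reflection_cocycle_def vadd_def vmod_def S_grp_def d8_act_def d8_mult_def)
  also have "generate S_grp \<dots> = two_A"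
    unfolding S.generate_insert_mult[OF K] two_A_generated by (simp add: insert_commute)
  finally show ?thesis .
qed

theorem lemma2p5:
  shows "group S_grp
     \<and> (S_grp \<lparr>carrier := two_A\<rparr>) \<cong> Z2_4
     \<and> (S_grp \<lparr>carrier := two_C\<rparr>) \<cong> Z2_4
     \<and> (\<exists>\<alpha>. \<alpha> \<in> iso S_grp S_grp
            \<and> \<not> (\<exists>g \<in> carrier S_grp. \<forall>x \<in> carrier S_grp.
                    \<alpha> x = g \<otimes>\<^bsub>S_grp\<^esub> x \<otimes>\<^bsub>S_grp\<^esub> inv\<^bsub>S_grp\<^esub> g)
            \<and> \<alpha> ` two_A = two_C \<and> \<alpha> ` two_C = two_A)"
proof -
  interpret S: group S_grp
    by (rule group_S_grp)
  have A: "S_grp\<lparr>carrier := two_A\<rparr> \<cong> Z2_4"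
    unfolding two_A_eq_img_psi
    by (rule group_hom.img_iso_if_inj[OF psi_group_hom psi_inj])
  have "subgroup two_A S_grp"
    unfolding two_A_generated by (rule S.generate_is_subgroup) (simp add: S_grp_def)
  then have "S_grp\<lparr>carrier := two_A\<rparr> \<cong> S_grp\<lparr>carrier := two_C\<rparr>"
    unfolding two_C_eq_img_alpha using iso_restrict[OF alpha_iso group_S_grp group_S_grp] is_isoI by blast
  then have C: "S_grp\<lparr>carrier := two_C\<rparr> \<cong> Z2_4"
    using A iso_trans group.iso_sym S.subgroup_imp_group \<open>subgroup two_A S_grp\<close> by blast
  show ?thesis
    using group_S_grp A C alpha_iso alpha_not_inner two_C_eq_img_alpha alpha_img_two_C by blast
qed

end
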